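(* Let $n,k\ge s$ and let $\lambda$ be a partition with at most $k-s$ parts. Then $$R^{n-1}_{k-s}\circ\cdots\circ R^{s+1}_{k-s}\circ R^{s}_{k-s}\big(\Delta_\lambda(c_1,\ldots,c_s)\big)=\sum_{S\in\binom{[n]}{s}}\frac{\Delta_\lambda(\gamma_S)\cdot\prod_{i\in\bar S}\gamma_i^k}{\prod_{i\in\bar S}\prod_{j\in S}(\gamma_i-\gamma_j)},$$ where $\binom{[n]}{s}$ is the set of $s$-element subsets of $[n]=\{1,\ldots,n\}$, $\bar S=[n]\setminus S$, and the left side is regarded as a symmetric polynomial in $\gamma_1,\ldots,\gamma_n$ with $c_i$ the $i$-th elementary symmetric polynomial.
   Context: In $\mathbb{Z}[c_1,\ldots,c_m]$, $\Delta_\lambda(c_1,\ldots,c_m)=\det(c_{\lambda_i+j-i})_{i,j}$ with $c_0=1$, $c_r=0$ for $r<0$ or $r>m$. When $c_1,\ldots,c_m$ are identified with the elementary symmetric polynomials in variables $\gamma_1,\ldots,\gamma_m$, $\Delta_\lambda(\gamma_S)$ denotes $\Delta_\lambda(c_1,\ldots,c_s)$ expressed in $\gamma_1,\ldots,\gamma_s$ with $\gamma_i$, $i\in S$, substituted for them. The width of a monomial in the $c_i$ is its number of factors; the width of a polynomial is the maximum width of its terms. $P^m_w$ is the space of polynomials of width $\le w$ in $\mathbb{Z}[c_1,\ldots,c_m]$; every $p\in P^m_w$ has a unique expression $p=\sum_\lambda a_\lambda\Delta_\lambda(c_1,\ldots,c_m)$ over partitions $\lambda=(\lambda_1,\ldots,\lambda_w)$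 with at most $w$ nonzero parts (padded by zeros). The raising operator $R^m_w:P^m_w\to P^{m+1}_w$ is $\sum_\lambda a_\lambda\Delta_\lambda(c_1,\ldots,c_m)\mapsto\sum_\lambda a_\lambda\Delta_{(\lambda_1+1,\ldots,\lambda_w+1)}(c_1,\ldots,c_{m+1})$. When $n=s$ the composition on the left is the identity. *)

theory Defs
  imports Complex_Main "Jordan_Normal_Form.Determinant"
begin

text \<open>Polynomials in c_1, c_2, ... with integer coefficients are represented by the
polynomial functions they induce on complex points c :: nat => complex (c i is the
value of c_i); since the complex numbers are infinite, this representation is faithful.\<close>

type_synonym cpoly = "(nat \<Rightarrow> complex) \<Rightarrow> complex"

definition cval :: "nat \<Rightarrow> (nat \<Rightarrow> complex) \<Rightarrow> int \<Rightarrow> complex" where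
  "cval m c r = (if r = 0 then 1 else if r < 0 \<or> r > int m then 0 else c (nat r))"

text \<open>Delta_lambda(c_1,...,c_m) = det (c_{lambda_i + j - i})_{i,j}; lambda given as a list
(padded by zeros), matrix size = length of the list.\<close>
definition Delta :: "nat \<Rightarrow> nat list \<Rightarrow> cpoly" where
  "Delta m lam c = det (mat (length lam) (length lam)
      (\<lambda>(i,j). cval m c (int (lam ! i) + int j - int i)))"

definition box :: "nat \<Rightarrow> nat \<Rightarrow> nat list set" where
  "box w m = {l. length l = w \<and> sorted_wrt (\<ge>) l \<and> (\<forall>x\<in>set l. x \<le> m)}"

definition raise_op :: "nat \<Rightarrow> nat \<Rightarrow> cpoly \<Rightarrow> cpoly" where
  "raise_op m w p = (THE q. \<exists>a :: nat list \<Rightarrow> int.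
      p = (\<lambda>c. \<Sum>l\<in>box w m. of_int (a l) * Delta m l c) \<and>
      q = (\<lambda>c. \<Sum>l\<in>box w m. of_int (a l) * Delta (Suc m) (map Suc l) c))"

fun raise_iter :: "nat \<Rightarrow> nat \<Rightarrow> nat \<Rightarrow> cpoly \<Rightarrow> cpoly" where
  "raise_iter w s 0 p = p"
| "raise_iter w s (Suc t) p = raise_op (s + t) w (raise_iter w s t p)"

definition esym :: "(nat \<Rightarrow> complex) \<Rightarrow> nat set \<Rightarrow> nat \<Rightarrow> complex" where
  "esym \<gamma> S i = (\<Sum>T | T \<subseteq> S \<and> card T = i. \<Prod>j\<in>T. \<gamma> j)"

end

theory Submission
  imports Defs "HOL-Computational_Algebra.Fundamental_Theorem_Algebra"
begin

text \<open>For \<open>|A| = m + 1\<close> and pairwise distinct \<open>\<gamma>\<^sub>i\<close>, one raising step is the identity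
  \<open>\<Delta>_(\<lambda>+1)(\<gamma>_A) = \<Sum>_(i\<in>A) \<gamma>_i^(w+m) / \<Prod>_(j\<in>A-i) (\<gamma>_i - \<gamma>_j) \<cdot> \<Delta>_\<lambda>(\<gamma>_(A-i))\<close>,
  where \<open>w\<close> is the number of parts of \<open>\<lambda>\<close>. It follows from the Pascal rule
  \<open>e_r(A) = e_r(A-i) + \<gamma>_i e_(r-1)(A-i)\<close> by column operations, a Laplace expansion along the
  last column, and the Lagrange identities \<open>\<Sum>_i \<gamma>_i^p / \<Prod>_(j\<noteq>i) (\<gamma>_i - \<gamma>_j) = [p = m]\<close>
  for \<open>p \<le> m\<close>. Iterating it \<open>n - s\<close> times and grouping the terms by the set \<open>S\<close> of surviving
  indices gives the right-hand side, the inner sums being again Lagrange sums equal to \<open>1\<close>.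

  The same identity shows that raising maps a vanishing combination of the \<open>\<Delta>_\<lambda>\<close> to a function
  vanishing at every point \<open>e(\<gamma>)\<close> with distinct \<open>\<gamma>\<^sub>i\<close>, hence (by a polynomial perturbation
  argument) everywhere. So the raising operator is well defined, and the left-hand side is
  \<open>\<Delta>_(\<lambda>+n-s)(\<gamma>_[n])\<close>.\<close>

section \<open>Elementary symmetric polynomials\<close>

lemma esym_zero: "finite B \<Longrightarrow> esym g B 0 = 1"
proof -
  assume "finite B"
  then have "{T. T \<subseteq> B \<and> card T = 0} = {{}}" by (auto dest: finite_subset)
  then show ?thesis unfolding esym_def by simp
qed

lemma esym_eq_0_if_card_less:
  assumes "finite B" and "card B < r"
  shows "esym g B r = 0"
proof -
  have "{T. T \<subseteq> B \<and> card T = r} = {}"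
    using assms card_mono[OF \<open>finite B\<close>] by (auto simp: not_le[symmetric])
  then show ?thesis unfolding esym_def by (simp only:) simp
qed

lemma esym_Suc_remove:
  assumes B: "finite B" and z: "z \<in> B"
  shows "esym g B (Suc r) = esym g (B - {z}) (Suc r) + g z * esym g (B - {z}) r"
proof -
  let ?C = "B - {z}"
  let ?big = "{T. T \<subseteq> ?C \<and> card T = Suc r}" and ?small = "{T. T \<subseteq> ?C \<and> card T = r}"
  have fin_C: "finite ?C" using B by simp
  have split: "{T. T \<subseteq> B \<and> card T = Suc r} = ?big \<union> insert z ` ?small"
  proof (intro equalityI subsetI)
    fix T assume T: "T \<in> {T. T \<subseteq> B \<and> card T = Suc r}"
    show "T \<in> ?big \<union> insert z ` ?small"
    proof (cases "z \<in> T")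
      case True
      have "finite T" using T B finite_subset by auto
      then have "T = insert z (T - {z})" "card (T - {z}) = r" using T True by auto
      then show ?thesis using T by blast
    qed (use T in auto)
  next
    fix T assume "T \<in> ?big \<union> insert z ` ?small"
    then show "T \<in> {T. T \<subseteq> B \<and> card T = Suc r}"
    proof
      assume "T \<in> insert z ` ?small"
      then obtain U where U: "U \<subseteq> ?C" "card U = r" "T = insert z U" by auto
      then have "finite U" "z \<notin> U" using fin_C finite_subset by auto
      then show ?thesis using U z by auto
    qed auto
  qed
  have inj: "inj_on (insert z) ?small"
    by (rule inj_onI) (metis Diff_insert_absorb insert_absorb subsetD Diff_iff singletonI mem_Collect_eq)
  have insert_prod: "(\<Prod>j\<in>insert z T. g j) = g z * (\<Prod>j\<in>T. g j)" if "T \<in> ?small" for T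
    using that fin_C by (subst prod.insert) (auto dest: finite_subset)
  have "esym g B (Suc r) = esym g ?C (Suc r) + (\<Sum>T\<in>insert z ` ?small. \<Prod>j\<in>T. g j)"
    unfolding esym_def split using fin_C by (intro sum.union_disjoint) (auto simp: finite_subset)
  also have "(\<Sum>T\<in>insert z ` ?small. \<Prod>j\<in>T. g j) = g z * esym g ?C r"
    by (simp add: sum.reindex[OF inj] insert_prod esym_def sum_distrib_left)
  finally show ?thesis .
qed

definition esym_int :: "(nat \<Rightarrow> complex) \<Rightarrow> nat set \<Rightarrow> int \<Rightarrow> complex" where
  "esym_int g B r = (if r < 0 then 0 else esym g B (nat r))"

lemma cval_card_esym: "finite B \<Longrightarrow> cval (card B) (esym g B) r = esym_int g B r"
  by (auto simp: cval_def esym_int_def esym_zero esym_eq_0_if_card_less)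

lemma esym_int_remove:
  assumes "finite B" "z \<in> B"
  shows "esym_int g B r = esym_int g (B - {z}) r + g z * esym_int g (B - {z}) (r - 1)"
proof (cases "r > 0")
  case True
  define q where "q = nat r - 1"
  have "nat r = Suc q" "nat (r - 1) = q" using True unfolding q_def by auto
  then show ?thesis using esym_Suc_remove[OF assms, of g q] True by (simp add: esym_int_def)
qed (use assms in \<open>auto simp: esym_int_def esym_zero\<close>)

lemma esym_remove_power_expansion:
  assumes "finite B" and "z \<in> B"
  shows "g z ^ K * esym g (B - {z}) R =
     (\<Sum>q=1..K. (-1)^(q+1) * g z ^ (K - q) * esym g B (R + q)) + (-1)^K * esym g (B - {z}) (R + K)"
proof (induction K)
  case (Suc K)
  have remove: "g z * esym g (B - {z}) (R + K) = esym g B (R + Suc K) - esym g (B - {z}) (R + Suc K)"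
    using esym_Suc_remove[OF assms, of g "R + K"] by simp
  have "g z ^ Suc K * esym g (B - {z}) R = g z * (g z ^ K * esym g (B - {z}) R)" by simp
  also have "\<dots> = (\<Sum>q=1..K. (-1)^(q+1) * g z ^ (Suc K - q) * esym g B (R + q))
      + (-1)^K * (g z * esym g (B - {z}) (R + K))"
    unfolding Suc.IH by (simp add: algebra_simps sum_distrib_left Suc_diff_le)
  also have "\<dots> = (\<Sum>q=1..Suc K. (-1)^(q+1) * g z ^ (Suc K - q) * esym g B (R + q))
      + (-1)^(Suc K) * esym g (B - {z}) (R + Suc K)"
    unfolding remove by (simp add: algebra_simps)
  finally show ?case .
qed simp

section \<open>Lagrange sums\<close>

definition lagrange_sum :: "(nat \<Rightarrow> complex) \<Rightarrow> nat set \<Rightarrow> nat \<Rightarrow> complex" where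
  "lagrange_sum g A p = (\<Sum>i\<in>A. g i ^ p / (\<Prod>j\<in>A - {i}. g i - g j))"

lemma lagrange_sum_Suc_remove:
  assumes A: "finite A" and z: "z \<in> A" and inj: "inj_on g A"
  shows "lagrange_sum g A (Suc p) - g z * lagrange_sum g A p = lagrange_sum g (A - {z}) p"
proof -
  have factor: "x ^ Suc p / D - c * (x ^ p / D) = x ^ p * (x - c) / D" for x c D :: complex
    by (cases "D = 0") (simp_all add: field_simps)
  have "lagrange_sum g A (Suc p) - g z * lagrange_sum g A p
      = (\<Sum>i\<in>A. g i ^ p * (g i - g z) / (\<Prod>j\<in>A - {i}. g i - g j))"
    unfolding lagrange_sum_def sum_distrib_left sum_subtractf[symmetric] factor ..
  also have "\<dots> = (\<Sum>i\<in>A - {z}. g i ^ p * (g i - g z) / (\<Prod>j\<in>A - {i}. g i - g j))"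
    by (subst sum.remove[OF A z]) simp
  also have "\<dots> = lagrange_sum g (A - {z}) p" unfolding lagrange_sum_def
  proof (rule sum.cong)
    fix i assume i: "i \<in> A - {z}"
    have nonzero: "g i - g z \<noteq> 0" using i z inj by (auto dest: inj_onD)
    have "(\<Prod>j\<in>A - {i}. g i - g j) = (\<Prod>j\<in>A - {z} - {i}. g i - g j) * (g i - g z)"
      using A i z by (subst prod.remove[of _ z]) (auto simp: Diff_insert2[symmetric] insert_commute mult.commute)
    then show "g i ^ p * (g i - g z) / (\<Prod>j\<in>A - {i}. g i - g j) = g i ^ p / (\<Prod>j\<in>A - {z} - {i}. g i - g j)"
      using nonzero by simp
  qed simp
  finally show ?thesis .
qed

text \<open>\<open>lagrange_sum g A p\<close> is the leading coefficient of the Lagrange interpolant of \<open>t\<^sup>p\<close>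
  at the nodes \<open>g ` A\<close>.\<close>

lemma lagrange_sum_values:
  "finite A \<Longrightarrow> card A = Suc N \<Longrightarrow> inj_on g A \<Longrightarrow>
    (\<forall>p<N. lagrange_sum g A p = 0) \<and> lagrange_sum g A N = 1"
proof (induction N arbitrary: A)
  case 0
  then obtain z where "A = {z}" by (auto simp: card_Suc_eq)
  then show ?case by (simp add: lagrange_sum_def)
next
  case (Suc N)
  note A = Suc.prems(1) and inj = Suc.prems(3)
  obtain z y where zy: "z \<in> A" "y \<in> A" "z \<noteq> y"
    using Suc.prems(2) by (auto simp: card_Suc_eq)
  have IH: "(\<forall>p<N. lagrange_sum g (A - {x}) p = 0) \<and> lagrange_sum g (A - {x}) N = 1"
    if "x \<in> A" for x
    using that Suc.prems by (intro Suc.IH) (auto intro: inj_on_subset)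
  have low: "lagrange_sum g A p = 0" if "p \<le> N" for p
  proof -
    have "(g y - g z) * lagrange_sum g A p = lagrange_sum g (A - {z}) p - lagrange_sum g (A - {y}) p"
      using lagrange_sum_Suc_remove[OF A zy(1) inj, of p] lagrange_sum_Suc_remove[OF A zy(2) inj, of p]
      by (simp add: algebra_simps)
    also have "\<dots> = 0"
      using IH[OF zy(1)] IH[OF zy(2)] that by (cases "p = N") auto
    finally show ?thesis using zy inj by (auto dest: inj_onD)
  qed
  have "lagrange_sum g A (Suc N) = g z * lagrange_sum g A N + lagrange_sum g (A - {z}) N"
    using lagrange_sum_Suc_remove[OF A zy(1) inj, of N] by (simp add: algebra_simps)
  then show ?case using low[of N] low IH[OF zy(1)] by (simp add: less_Suc_eq_le)
qed

lemma lagrange_sum_esym_remove_eq_0: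
  assumes A: "finite A" and card: "card A = Suc m" and inj: "inj_on g A" and R: "1 \<le> R"
  shows "(\<Sum>i\<in>A. g i ^ m * esym g (A - {i}) R / (\<Prod>j\<in>A - {i}. g i - g j)) = 0"
proof (cases "m < R")
  case True
  then have "esym g (A - {i}) R = 0" if "i \<in> A" for i
    using that A card by (intro esym_eq_0_if_card_less) auto
  then show ?thesis by simp
next
  case False
  define K where "K = Suc m - R"
  have K: "R - 1 + K = m" "R + K = Suc m" using False R unfolding K_def by auto
  have expand: "g i ^ m * esym g (A - {i}) R = (\<Sum>q=1..K. (-1)^(q+1) * esym g A (R + q) * g i ^ (m - q))"
    if i: "i \<in> A" for i
  proof -
    have vanish: "esym g (A - {i}) (R + K) = 0" using A card i K by (intro esym_eq_0_if_card_less) auto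
    have "g i ^ m * esym g (A - {i}) R = g i ^ (R - 1) * (g i ^ K * esym g (A - {i}) R)"
      unfolding K(1)[symmetric] power_add by (simp only: mult.assoc)
    also have "\<dots> = g i ^ (R - 1) * (\<Sum>q=1..K. (-1)^(q+1) * g i ^ (K - q) * esym g A (R + q))"
      unfolding esym_remove_power_expansion[OF A i] vanish by simp
    also have "\<dots> = (\<Sum>q=1..K. (-1)^(q+1) * esym g A (R + q) * g i ^ (m - q))"
      unfolding sum_distrib_left
    proof (rule sum.cong)
      fix q assume "q \<in> {1..K}"
      then have "g i ^ (R - 1) * g i ^ (K - q) = g i ^ (m - q)"
        using K by (simp flip: power_add)
      then show "g i ^ (R - 1) * ((-1)^(q+1) * g i ^ (K - q) * esym g A (R + q)) =
            (-1)^(q+1) * esym g A (R + q) * g i ^ (m - q)"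
        by (simp add: algebra_simps)
    qed simp
    finally show ?thesis .
  qed
  have "(\<Sum>i\<in>A. g i ^ m * esym g (A - {i}) R / (\<Prod>j\<in>A - {i}. g i - g j))
      = (\<Sum>i\<in>A. \<Sum>q=1..K. (-1)^(q+1) * esym g A (R + q) * (g i ^ (m - q) / (\<Prod>j\<in>A - {i}. g i - g j)))"
    by (rule sum.cong) (simp_all add: expand sum_divide_distrib)
  also have "\<dots> = (\<Sum>q=1..K. (-1)^(q+1) * esym g A (R + q) * lagrange_sum g A (m - q))"
    unfolding lagrange_sum_def sum_distrib_left by (rule sum.swap)
  also have "\<dots> = 0"
    using lagrange_sum_values[OF A card inj] K by (intro sum.neutral) auto
  finally show ?thesis .
qed

lemma lagrange_sum_esym_int_remove:
  assumes A: "finite A" and card: "card A = Suc m" and inj: "inj_on g A" and x: "0 \<le> x"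
  shows "(\<Sum>i\<in>A. g i ^ Suc m * esym_int g (A - {i}) x / (\<Prod>j\<in>A - {i}. g i - g j)) = esym_int g A (x + 1)"
proof -
  obtain R where R: "x = int R" using x by (metis nonneg_eq_int)
  have summand: "g i ^ Suc m * esym_int g (A - {i}) x / (\<Prod>j\<in>A - {i}. g i - g j)
      = esym g A (Suc R) * (g i ^ m / (\<Prod>j\<in>A - {i}. g i - g j))
        - g i ^ m * esym g (A - {i}) (Suc R) / (\<Prod>j\<in>A - {i}. g i - g j)" if i: "i \<in> A" for i
  proof -
    have "g i ^ Suc m * esym_int g (A - {i}) x = g i ^ m * (g i * esym g (A - {i}) R)"
      unfolding R esym_int_def by simp
    also have "\<dots> = esym g A (Suc R) * g i ^ m - g i ^ m * esym g (A - {i}) (Suc R)"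
      unfolding esym_Suc_remove[OF A i] by (simp add: algebra_simps)
    finally show ?thesis by (simp add: diff_divide_distrib)
  qed
  have "(\<Sum>i\<in>A. g i ^ Suc m * esym_int g (A - {i}) x / (\<Prod>j\<in>A - {i}. g i - g j))
     = esym g A (Suc R) * lagrange_sum g A m
       - (\<Sum>i\<in>A. g i ^ m * esym g (A - {i}) (Suc R) / (\<Prod>j\<in>A - {i}. g i - g j))"
    unfolding lagrange_sum_def sum_distrib_left sum_subtractf[symmetric] by (rule sum.cong[OF refl summand])
  also have "\<dots> = esym g A (Suc R)"
    using lagrange_sum_values[OF A card inj] lagrange_sum_esym_remove_eq_0[OF A card inj, of "Suc R"] by simp
  also have "\<dots> = esym_int g A (x + 1)"
  proof -
    have "nat (int R + 1) = Suc R" by simp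
    then show ?thesis unfolding R esym_int_def by simp
  qed
  finally show ?thesis .
qed

section \<open>The determinant \<open>\<Delta>\<^sub>\<lambda>\<close> at elementary symmetric polynomials\<close>

definition Delta_gamma :: "(nat \<Rightarrow> complex) \<Rightarrow> nat set \<Rightarrow> nat list \<Rightarrow> complex" where
  "Delta_gamma g B l =
     det (mat (length l) (length l) (\<lambda>(i,j). esym_int g B (int (l ! i) + int j - int i)))"

lemma Delta_card_esym: "finite B \<Longrightarrow> Delta (card B) l (esym g B) = Delta_gamma g B l"
  unfolding Delta_def Delta_gamma_def by (simp add: cval_card_esym)

lemma Delta_gamma_Nil: "Delta_gamma g B [] = 1"
  unfolding Delta_gamma_def by (rule det_dim_zero) simp

text \<open>Replacing column \<open>b < w\<close> by column \<open>b + 1\<close> plus \<open>g i\<close> times column \<open>b\<close> scales the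
  determinant by \<open>g i\<close> and, by the Pascal rule, turns it into a column of \<open>e_r(A)\<close>.\<close>

lemma det_esym_int_remove_columns:
  assumes A: "finite A" and i: "i \<in> A"
  shows "det (mat (Suc w) (Suc w) (\<lambda>(a,b). esym_int g (A - {i}) (r a + int b))) * g i ^ w =
    det (mat (Suc w) (Suc w) (\<lambda>(a,b). if b < w then esym_int g A (r a + int b + 1)
                                       else esym_int g (A - {i}) (r a + int b)))"
    (is "det ?M * _ = det ?N")
proof -
  define U where "U = mat (Suc w) (Suc w) (\<lambda>(k,b). (if k = b then (if b < w then g i else 1) else 0)
                                             + (if k = Suc b then 1 else 0))"
  have carrier: "?M \<in> carrier_mat (Suc w) (Suc w)" "U \<in> carrier_mat (Suc w) (Suc w)"
    unfolding U_def by auto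
  have "diag_mat U = replicate w (g i) @ [1]"
    by (rule nth_equalityI) (auto simp: diag_mat_def U_def nth_append)
  moreover have "det U = prod_list (diag_mat U)"
    by (rule det_lower_triangular[OF _ carrier(2)]) (auto simp: U_def)
  ultimately have det_U: "det U = g i ^ w" by simp
  have "?M * U = ?N"
  proof (rule eq_matI)
    fix a b assume "a < dim_row ?N" and "b < dim_col ?N"
    then have a: "a < Suc w" and b: "b < Suc w" by auto
    have "(?M * U) $$ (a, b) = (\<Sum>k<Suc w. (if k = b then ?M $$ (a, k) * (if b < w then g i else 1) else 0)
                 + (if k = Suc b then ?M $$ (a, k) else 0))"
      using a b by (auto simp: scalar_prod_def U_def atLeast0LessThan intro!: sum.cong)
    also have "\<dots> = ?M $$ (a, b) * (if b < w then g i else 1) + (if b < w then ?M $$ (a, Suc b) else 0)"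
      using b by (cases "b < w") (simp_all add: sum.distrib less_Suc_eq)
    also have "\<dots> = ?N $$ (a, b)"
      using esym_int_remove[OF A i, of g "r a + int b + 1"] a b by (auto simp: algebra_simps)
    finally show "(?M * U) $$ (a, b) = ?N $$ (a, b)" .
  qed (auto simp: U_def)
  then show ?thesis using det_mult[OF carrier] det_U by simp
qed

text \<open>The matrices of \<open>det_esym_int_remove_columns\<close> share the cofactors of their last column
  with the matrix of \<open>Delta_gamma g A (map Suc l)\<close>, so the sum over \<open>i\<close> moves into that column,
  where \<open>lagrange_sum_esym_int_remove\<close> evaluates it.\<close>

lemma Delta_gamma_map_Suc:
  assumes A: "finite A" and card: "card A = Suc m" and inj: "inj_on g A"
  shows "Delta_gamma g A (map Suc l) =
     (\<Sum>i\<in>A. g i ^ (length l + m) / (\<Prod>j\<in>A - {i}. g i - g j) * Delta_gamma g (A - {i}) l)"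
proof (cases l rule: rev_cases)
  case Nil
  then show ?thesis using lagrange_sum_values[OF A card inj] by (simp add: Delta_gamma_Nil lagrange_sum_def)
next
  case (snoc l' x)
  define w where "w = length l'"
  have len: "length l = Suc w" unfolding w_def snoc by simp
  define r where "r a = int (l ! a) - int a" for a
  define C where "C = mat (Suc w) (Suc w) (\<lambda>(a,b). esym_int g A (r a + int b + 1))"
  define N where "N i = mat (Suc w) (Suc w) (\<lambda>(a,b). if b < w then esym_int g A (r a + int b + 1)
                                                   else esym_int g (A - {i}) (r a + int b))" for i
  have C: "Delta_gamma g A (map Suc l) = det C"
    unfolding Delta_gamma_def C_def length_map len
    by (rule arg_cong[where f = det], rule eq_matI) (auto simp: r_def len intro!: arg_cong[where f = "esym_int g A"])
  have entries: "(\<lambda>(a,b). esym_int g B (int (l ! a) + int b - int a)) = (\<lambda>(a,b). esym_int g B (r a + int b))"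
    for B by (auto simp: r_def algebra_simps)
  have N: "Delta_gamma g (A - {i}) l * g i ^ w = det (N i)" if "i \<in> A" for i
    unfolding N_def Delta_gamma_def len entries det_esym_int_remove_columns[OF A that] ..
  have cofactor_N: "cofactor (N i) a w = cofactor C a w" for i a
    unfolding cofactor_def by (auto simp: N_def C_def mat_delete_def intro!: arg_cong[where f = det])
  have laplace_N: "det (N i) = (\<Sum>a<Suc w. esym_int g (A - {i}) (r a + int w) * cofactor C a w)" for i
  proof -
    have "det (N i) = (\<Sum>a<Suc w. N i $$ (a, w) * cofactor (N i) a w)"
      by (rule laplace_expansion_column) (auto simp: N_def)
    then show ?thesis unfolding cofactor_N by (auto simp: N_def intro!: sum.cong)
  qed
  have "det C = (\<Sum>a<Suc w. C $$ (a, w) * cofactor C a w)"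
    by (rule laplace_expansion_column) (auto simp: C_def)
  then have laplace_C: "det C = (\<Sum>a<Suc w. esym_int g A (r a + int w + 1) * cofactor C a w)"
    by (auto simp: C_def intro!: sum.cong)
  have "(\<Sum>i\<in>A. g i ^ (length l + m) / (\<Prod>j\<in>A - {i}. g i - g j) * Delta_gamma g (A - {i}) l)
      = (\<Sum>i\<in>A. g i ^ Suc m / (\<Prod>j\<in>A - {i}. g i - g j) * det (N i))"
    using N by (intro sum.cong) (simp_all add: len power_add algebra_simps)
  also have "\<dots> = (\<Sum>a<Suc w. cofactor C a w *
          (\<Sum>i\<in>A. g i ^ Suc m * esym_int g (A - {i}) (r a + int w) / (\<Prod>j\<in>A - {i}. g i - g j)))"
    unfolding laplace_N sum_distrib_left by (subst sum.swap) (simp add: algebra_simps)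
  also have "\<dots> = (\<Sum>a<Suc w. cofactor C a w * esym_int g A (r a + int w + 1))"
    using lagrange_sum_esym_int_remove[OF A card inj] by (intro sum.cong) (auto simp: r_def)
  also have "\<dots> = Delta_gamma g A (map Suc l)"
    unfolding C laplace_C by (simp add: mult.commute)
  finally show ?thesis ..
qed

lemma weight_remove_node:
  fixes g :: "nat \<Rightarrow> 'a::field"
  assumes A: "finite A" and inj: "inj_on g A" and S: "S \<subseteq> A" and i: "i \<in> A - S"
  shows "g i ^ (k + t) / (\<Prod>j\<in>A - {i}. g i - g j) *
      ((\<Prod>l\<in>A - {i} - S. g l ^ k) / (\<Prod>l\<in>A - {i} - S. \<Prod>j\<in>S. g l - g j)) =
    (\<Prod>l\<in>A - S. g l ^ k) / (\<Prod>l\<in>A - S. \<Prod>j\<in>S. g l - g j) *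
      (g i ^ t / (\<Prod>j\<in>A - S - {i}. g i - g j))"
proof -
  define T where "T = A - S - {i}"
  have fin: "finite S" "finite T" using A S finite_subset unfolding T_def by auto
  have "i \<notin> T" "A - S = insert i T" "A - {i} = S \<union> T" "A - {i} - S = T" "S \<inter> T = {}"
    using S i unfolding T_def by auto
  then have split: "(\<Prod>l\<in>A - S. g l ^ k) = g i ^ k * (\<Prod>l\<in>T. g l ^ k)"
    "(\<Prod>l\<in>A - S. \<Prod>j\<in>S. g l - g j) = (\<Prod>j\<in>S. g i - g j) * (\<Prod>l\<in>T. \<Prod>j\<in>S. g l - g j)"
    "(\<Prod>j\<in>A - {i}. g i - g j) = (\<Prod>j\<in>S. g i - g j) * (\<Prod>j\<in>T. g i - g j)"
    "A - {i} - S = T"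
    using fin by (simp_all add: prod.union_disjoint)
  have "(\<Prod>j\<in>S. g i - g j) \<noteq> 0" "(\<Prod>j\<in>T. g i - g j) \<noteq> 0"
    using S i fin inj unfolding T_def by (auto simp: prod_zero_iff dest: inj_onD)
  moreover have "(\<Prod>l\<in>T. \<Prod>j\<in>S. g l - g j) \<noteq> 0"
    using S fin inj unfolding T_def by (auto simp: prod_zero_iff dest: inj_onD)
  ultimately show ?thesis unfolding split T_def[symmetric] by (simp add: power_add field_simps)
qed

lemma Delta_gamma_shift_expansion:
  assumes k: "k = length lam + s"
  shows "finite A \<Longrightarrow> card A = s + t \<Longrightarrow> inj_on g A \<Longrightarrow>
    Delta_gamma g A (map (\<lambda>x. x + t) lam) =
    (\<Sum>S | S \<subseteq> A \<and> card S = s.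
       Delta_gamma g S lam * (\<Prod>i\<in>A - S. g i ^ k) / (\<Prod>i\<in>A - S. \<Prod>j\<in>S. g i - g j))"
proof (induction t arbitrary: A)
  case 0
  then have "{S. S \<subseteq> A \<and> card S = s} = {A}" by (auto dest: card_subset_eq)
  then show ?case by simp
next
  case (Suc t)
  note A = Suc.prems(1) and card = Suc.prems(2) and inj = Suc.prems(3)
  define Sets where "Sets = {S. S \<subseteq> A \<and> card S = s}"
  define W where "W B S = (\<Prod>i\<in>B - S. g i ^ k) / (\<Prod>i\<in>B - S. \<Prod>j\<in>S. g i - g j)" for B S
  have IH: "Delta_gamma g (A - {i}) (map (\<lambda>x. x + t) lam) =
      (\<Sum>S\<in>{S\<in>Sets. i \<notin> S}. Delta_gamma g S lam * W (A - {i}) S)" if "i \<in> A" for i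
  proof -
    have "{S. S \<subseteq> A - {i} \<and> card S = s} = {S\<in>Sets. i \<notin> S}" unfolding Sets_def by auto
    then show ?thesis
      using Suc.IH[of "A - {i}"] A card that inj by (simp add: inj_on_diff W_def mult.assoc)
  qed
  have "Delta_gamma g A (map (\<lambda>x. x + Suc t) lam) =
      (\<Sum>i\<in>A. g i ^ (k + t) / (\<Prod>j\<in>A - {i}. g i - g j) * Delta_gamma g (A - {i}) (map (\<lambda>x. x + t) lam))"
    using Delta_gamma_map_Suc[OF A _ inj, of "s + t" "map (\<lambda>x. x + t) lam"] card k
    by (simp add: comp_def add.commute add.left_commute)
  also have "\<dots> = (\<Sum>i\<in>A. \<Sum>S\<in>{S\<in>Sets. i \<notin> S}.
        g i ^ (k + t) / (\<Prod>j\<in>A - {i}. g i - g j) * (Delta_gamma g S lam * W (A - {i}) S))"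
    by (intro sum.cong) (simp_all add: IH sum_distrib_left)
  also have "\<dots> = (\<Sum>S\<in>Sets. \<Sum>i\<in>{i\<in>A. i \<notin> S}.
        g i ^ (k + t) / (\<Prod>j\<in>A - {i}. g i - g j) * (Delta_gamma g S lam * W (A - {i}) S))"
    using A by (intro sum.swap_restrict) (simp_all add: Sets_def)
  also have "\<dots> = (\<Sum>S\<in>Sets. Delta_gamma g S lam * W A S * lagrange_sum g (A - S) t)"
    unfolding lagrange_sum_def sum_distrib_left
  proof (intro sum.cong)
    fix S i assume "S \<in> Sets" "i \<in> A - S"
    then have "g i ^ (k + t) / (\<Prod>j\<in>A - {i}. g i - g j) * W (A - {i}) S =
        W A S * (g i ^ t / (\<Prod>j\<in>A - S - {i}. g i - g j))"
      using weight_remove_node[OF A inj, of S i k t] unfolding Sets_def W_def by simp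
    then show "g i ^ (k + t) / (\<Prod>j\<in>A - {i}. g i - g j) * (Delta_gamma g S lam * W (A - {i}) S) =
        Delta_gamma g S lam * W A S * (g i ^ t / (\<Prod>j\<in>A - S - {i}. g i - g j))"
      by (metis mult.assoc mult.left_commute)
  qed auto
  also have "\<dots> = (\<Sum>S\<in>Sets. Delta_gamma g S lam * W A S)"
  proof (intro sum.cong)
    fix S assume S: "S \<in> Sets"
    then have "card (A - S) = Suc t"
      using A card card_Diff_subset[of S A] finite_subset[of S A] unfolding Sets_def by simp
    then have "lagrange_sum g (A - S) t = 1" using lagrange_sum_values[of "A - S" t g] A inj by (auto intro: inj_on_diff)
    then show "Delta_gamma g S lam * W A S * lagrange_sum g (A - S) t = Delta_gamma g S lam * W A S" by simp
  qed simp
  finally show ?case unfolding Sets_def W_def by (simp add: times_divide_eq_right)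
qed

lemma Delta_esym_shift_expansion:
  assumes "finite A" "card A = s + t" "inj_on g A" "k = length lam + s"
  shows "Delta (s + t) (map (\<lambda>x. x + t) lam) (esym g A) =
    (\<Sum>S | S \<subseteq> A \<and> card S = s.
       Delta s lam (esym g S) * (\<Prod>i\<in>A - S. g i ^ k) / (\<Prod>i\<in>A - S. \<Prod>j\<in>S. g i - g j))"
proof -
  have "Delta s lam (esym g S) = Delta_gamma g S lam" if "S \<subseteq> A" "card S = s" for S
    using that Delta_card_esym[of S lam g] assms(1) finite_subset by blast
  then show ?thesis
    using Delta_gamma_shift_expansion[OF assms(4) assms(1-3)] Delta_card_esym[OF assms(1)] assms(2)
    by simp
qed

section \<open>The raising operator is well defined\<close>

definition poly_fun :: "(complex \<Rightarrow> complex) \<Rightarrow> bool" where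
  "poly_fun f \<longleftrightarrow> (\<exists>p. f = poly p)"

lemma poly_fun_const: "poly_fun (\<lambda>x. c)"
  unfolding poly_fun_def by (rule exI[of _ "[:c:]"]) auto

lemma poly_fun_ident: "poly_fun (\<lambda>x. x)"
  unfolding poly_fun_def by (rule exI[of _ "[:0, 1:]"]) auto

lemma poly_fun_add:
  assumes "poly_fun f" and "poly_fun g"
  shows "poly_fun (\<lambda>x. f x + g x)"
proof -
  obtain p q where "f = poly p" "g = poly q" using assms unfolding poly_fun_def by blast
  then have "(\<lambda>x. f x + g x) = poly (p + q)" by (auto simp: poly_add)
  then show ?thesis unfolding poly_fun_def by blast
qed

lemma poly_fun_mult:
  assumes "poly_fun f" and "poly_fun g"
  shows "poly_fun (\<lambda>x. f x * g x)"
proof -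
  obtain p q where "f = poly p" "g = poly q" using assms unfolding poly_fun_def by blast
  then have "(\<lambda>x. f x * g x) = poly (p * q)" by (auto simp: poly_mult)
  then show ?thesis unfolding poly_fun_def by blast
qed

lemma poly_fun_sum: "(\<And>i. i \<in> I \<Longrightarrow> poly_fun (f i)) \<Longrightarrow> poly_fun (\<lambda>x. \<Sum>i\<in>I. f i x)"
  by (induction I rule: infinite_finite_induct) (simp_all add: poly_fun_const poly_fun_add)

lemma poly_fun_prod: "(\<And>i. i \<in> I \<Longrightarrow> poly_fun (f i)) \<Longrightarrow> poly_fun (\<lambda>x. \<Prod>i\<in>I. f i x)"
  by (induction I rule: infinite_finite_induct) (simp_all add: poly_fun_const poly_fun_mult)

lemma poly_fun_eq_0_if_cofinite_zeros:
  assumes "poly_fun f" and "finite Z" and "\<And>x. x \<notin> Z \<Longrightarrow> f x = 0"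
  shows "f x = 0"
proof -
  obtain p where p: "f = poly p" using assms(1) unfolding poly_fun_def by blast
  have "infinite (UNIV - Z :: complex set)"
    by (rule Diff_infinite_finite[OF assms(2) infinite_UNIV_char_0])
  moreover have "UNIV - Z \<subseteq> {x. poly p x = 0}" using assms(3) p by auto
  ultimately have "infinite {x. poly p x = 0}" using finite_subset by blast
  then have "p = 0" using poly_roots_finite by blast
  then show ?thesis using p by simp
qed

lemma det_mat_eq_sum:
  "det (mat n n f) = (\<Sum>p | p permutes {0..<n}. signof p * (\<Prod>i = 0..<n. f (i, p i)))"
  unfolding det_def'[of "mat n n f" n, simplified]
  by (intro sum.cong refl arg_cong[where f = "(*) _"] prod.cong)

lemma poly_fun_Delta_esym:
  assumes "\<And>i. poly_fun (\<lambda>x. G x i)"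
  shows "poly_fun (\<lambda>x. Delta m l (esym (G x) B))"
proof -
  have "poly_fun (\<lambda>x. esym (G x) B r)" for r
    unfolding esym_def using assms by (intro poly_fun_sum poly_fun_prod)
  then have "poly_fun (\<lambda>x. cval m (esym (G x) B) r)" for r
    unfolding cval_def by (cases "r = 0"; cases "r < 0 \<or> int m < r") (simp_all add: poly_fun_const)
  then show ?thesis
    unfolding Delta_def det_mat_eq_sum by (intro poly_fun_sum poly_fun_mult poly_fun_const poly_fun_prod) simp
qed

lemma finite_non_injective_shifts:
  fixes g :: "nat \<Rightarrow> complex"
  assumes "finite I"
  shows "finite {x. \<not> inj_on (\<lambda>i. g i + x * of_nat i) I}"
proof (rule finite_subset)
  show "{x. \<not> inj_on (\<lambda>i. g i + x * of_nat i) I} \<subseteq> (\<lambda>(i, j). (g j - g i) / (of_nat i - of_nat j)) ` (I \<times> I)"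
  proof
    fix x assume "x \<in> {x. \<not> inj_on (\<lambda>i. g i + x * of_nat i) I}"
    then obtain i j where ij: "i \<in> I" "j \<in> I" "i \<noteq> j" "g i + x * of_nat i = g j + x * of_nat j"
      unfolding inj_on_def by blast
    then have "(of_nat i - of_nat j :: complex) \<noteq> 0" "x * (of_nat i - of_nat j) = g j - g i"
      by (auto simp: algebra_simps)
    then have "x = (g j - g i) / (of_nat i - of_nat j)" by (simp add: field_simps)
    then show "x \<in> (\<lambda>(i, j). (g j - g i) / (of_nat i - of_nat j)) ` (I \<times> I)" using ij by force
  qed
qed (use assms in simp)

lemma coeff_prod_linear:
  assumes "finite B"
  shows "coeff (\<Prod>i\<in>B. [:g i, 1:]) j = (if j \<le> card B then esym g B (card B - j) else 0)"
  using assms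
proof (induction B arbitrary: j rule: finite_induct)
  case empty
  then show ?case by (cases j) (simp_all add: esym_zero)
next
  case (insert z B)
  let ?P = "\<Prod>i\<in>B. [:g i, 1:]" and ?n = "card B"
  have remove: "esym g (insert z B) (Suc r) = esym g B (Suc r) + g z * esym g B r" for r
    using esym_Suc_remove[of "insert z B" z g r] insert.hyps by simp
  have "(\<Prod>i\<in>insert z B. [:g i, 1:]) = smult (g z) ?P + pCons 0 ?P" using insert by simp
  then have coeff: "coeff (\<Prod>i\<in>insert z B. [:g i, 1:]) j = g z * coeff ?P j + coeff (pCons 0 ?P) j"
    by simp
  show ?case
  proof (cases j)
    case 0
    then show ?thesis
      unfolding coeff using insert.hyps insert.IH[of 0] remove[of ?n]
        esym_eq_0_if_card_less[OF insert.hyps(1), of "Suc ?n" g]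
      by simp
  next
    case (Suc j')
    then have coeff_Suc: "coeff (\<Prod>i\<in>insert z B. [:g i, 1:]) j = g z * coeff ?P j + coeff ?P j'"
      unfolding coeff by simp
    consider "j \<le> ?n" | "j = Suc ?n" | "j > Suc ?n" by linarith
    then show ?thesis
    proof cases
      case 1
      then have "?n - j' = Suc (?n - j)" using Suc by simp
      then show ?thesis unfolding coeff_Suc using 1 insert.hyps insert.IH[of j'] insert.IH[of j] remove[of "?n - j"] Suc
        by (simp add: algebra_simps)
    qed (use insert.hyps insert.IH[of j'] insert.IH[of j] Suc in \<open>simp_all add: coeff_Suc esym_zero\<close>)
  qed
qed

lemma ex_esym_eq: "\<exists>g. \<forall>r\<in>{1..N}. esym g {1..N} r = c r"
proof -
  define p :: "complex poly" where "p = monom 1 N + (\<Sum>j<N. monom (c (N - j)) j)"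
  have coeff_p: "coeff p j = (if j = N then 1 else if j < N then c (N - j) else 0)" for j
    unfolding p_def by (simp add: coeff_sum coeff_monom)
  have "degree p = N"
    by (rule antisym, rule degree_le) (simp_all add: coeff_p le_degree)
  then have "lead_coeff p = 1" by (simp add: coeff_p)
  obtain root where "smult (lead_coeff p) (\<Prod>i<degree p. [:- root i, 1:]) = p"
    by (rule complex_poly_decompose')
  then have p_prod: "p = (\<Prod>i\<in>{1..N}. [:- root (i - 1), 1:])"
    using \<open>degree p = N\<close> \<open>lead_coeff p = 1\<close> by (simp add: prod.atLeast1_atMost_eq)
  then have "esym (\<lambda>i. - root (i - 1)) {1..N} r = c r" if "r \<in> {1..N}" for r
  proof -
    have "N - r < N" "N - (N - r) = r" using that by auto
    then show ?thesis using that coeff_p[of "N - r"] p_prod by (simp add: coeff_prod_linear)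
  qed
  then show ?thesis by blast
qed

lemma Delta_cong:
  assumes "\<And>r. r \<in> {1..m} \<Longrightarrow> c r = c' r"
  shows "Delta m l c = Delta m l c'"
proof -
  have "cval m c r = cval m c' r" for r
  proof (cases "0 < r \<and> r \<le> int m")
    case True
    then have "nat r \<in> {1..m}" by auto
    then show ?thesis using True assms by (simp add: cval_def)
  qed (auto simp: cval_def)
  then have "cval m c = cval m c'" ..
  then show ?thesis unfolding Delta_def by simp
qed

lemma finite_box: "finite (box w m)"
proof (rule finite_subset)
  show "box w m \<subseteq> {xs. set xs \<subseteq> {0..m} \<and> length xs = w}" unfolding box_def by auto
qed (simp add: finite_lists_length_eq)

text \<open>At points with distinct coordinates the raised polynomial is a linear combination of
  the original one at \<open>e(A - {i})\<close>, by \<open>Delta_gamma_map_Suc\<close>.\<close>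

lemma raised_combination_eq_0_at_distinct:
  assumes zero: "\<And>c. (\<Sum>l\<in>box w m. of_int (d l) * Delta m l c) = 0"
    and A: "finite A" and card: "card A = Suc m" and inj: "inj_on g A"
  shows "(\<Sum>l\<in>box w m. of_int (d l) * Delta (Suc m) (map Suc l) (esym g A)) = 0"
proof -
  have raise: "Delta (Suc m) (map Suc l) (esym g A) =
      (\<Sum>i\<in>A. g i ^ (w + m) / (\<Prod>j\<in>A - {i}. g i - g j) * Delta m l (esym g (A - {i})))"
    if "l \<in> box w m" for l
  proof -
    have "Delta m l (esym g (A - {i})) = Delta_gamma g (A - {i}) l" if "i \<in> A" for i
      using Delta_card_esym[of "A - {i}" l g] A card that by simp
    then show ?thesis
      using Delta_card_esym[OF A, of "map Suc l" g] Delta_gamma_map_Suc[OF A card inj, of l] card that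
      by (simp add: box_def)
  qed
  have "(\<Sum>l\<in>box w m. of_int (d l) * Delta (Suc m) (map Suc l) (esym g A))
      = (\<Sum>i\<in>A. g i ^ (w + m) / (\<Prod>j\<in>A - {i}. g i - g j) *
                  (\<Sum>l\<in>box w m. of_int (d l) * Delta m l (esym g (A - {i}))))"
    unfolding sum_distrib_left by (subst sum.swap) (simp add: raise sum_distrib_left algebra_simps)
  also have "\<dots> = 0" using zero by simp
  finally show ?thesis .
qed

text \<open>Every point \<open>c\<close> is \<open>e({1..m+1})\<close> at the roots of \<open>t\<^sup>m\<^sup>+\<^sup>1 + c\<^sub>1 t\<^sup>m + \<dots>\<close>, and
  perturbing these roots by \<open>x * i\<close> makes them distinct for all but finitely many \<open>x\<close>; the
  raised combination is a polynomial in \<open>x\<close>, so it vanishes at \<open>x = 0\<close> as well.\<close>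

lemma raised_combination_eq_0:
  assumes zero: "\<And>c. (\<Sum>l\<in>box w m. of_int (d l) * Delta m l c) = 0"
  shows "(\<Sum>l\<in>box w m. of_int (d l) * Delta (Suc m) (map Suc l) c) = 0"
proof -
  obtain g where g: "\<forall>r\<in>{1..Suc m}. esym g {1..Suc m} r = c r" using ex_esym_eq by blast
  define G where "G x = (\<Sum>l\<in>box w m. of_int (d l) *
      Delta (Suc m) (map Suc l) (esym (\<lambda>i. g i + x * of_nat i) {1..Suc m}))" for x
  have "poly_fun G"
    unfolding G_def
    by (intro poly_fun_sum poly_fun_mult poly_fun_const poly_fun_Delta_esym poly_fun_add poly_fun_ident)
  then have "G 0 = 0"
    using finite_non_injective_shifts[of "{1..Suc m}" g]
    by (rule poly_fun_eq_0_if_cofinite_zeros) (auto simp: G_def intro: raised_combination_eq_0_at_distinct[OF zero])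
  then show ?thesis
    using Delta_cong[of "Suc m" c "esym g {1..Suc m}"] g by (simp add: G_def)
qed

lemma raise_op_combination:
  "raise_op m w (\<lambda>c. \<Sum>l\<in>box w m. of_int (a l) * Delta m l c) =
   (\<lambda>c. \<Sum>l\<in>box w m. of_int (a l) * Delta (Suc m) (map Suc l) c)"
  unfolding raise_op_def
proof (rule the_equality)
  fix q assume "\<exists>b. (\<lambda>c. \<Sum>l\<in>box w m. of_int (a l) * Delta m l c) = (\<lambda>c. \<Sum>l\<in>box w m. of_int (b l) * Delta m l c) \<and>
      q = (\<lambda>c. \<Sum>l\<in>box w m. of_int (b l) * Delta (Suc m) (map Suc l) c)"
  then obtain b where b: "(\<lambda>c. \<Sum>l\<in>box w m. of_int (a l) * Delta m l c) = (\<lambda>c. \<Sum>l\<in>box w m. of_int (b l) * Delta m l c)"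
    and q: "q = (\<lambda>c. \<Sum>l\<in>box w m. of_int (b l) * Delta (Suc m) (map Suc l) c)" by blast
  have "(\<Sum>l\<in>box w m. of_int (a l - b l) * Delta m l c) = 0" for c
    using fun_cong[OF b, of c] by (simp add: left_diff_distrib sum_subtractf)
  then have "(\<Sum>l\<in>box w m. of_int (a l - b l) * Delta (Suc m) (map Suc l) c) = 0" for c
    by (rule raised_combination_eq_0)
  then show "q = (\<lambda>c. \<Sum>l\<in>box w m. of_int (a l) * Delta (Suc m) (map Suc l) c)"
    unfolding q by (simp add: fun_eq_iff left_diff_distrib sum_subtractf)
qed blast

section \<open>Iterated raising\<close>

lemma raise_op_Delta:
  assumes "L \<in> box w m"
  shows "raise_op m w (Delta m L) = Delta (Suc m) (map Suc L)"
  using raise_op_combination[of m w "\<lambda>l. if l = L then 1 else 0"] assms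
  by (simp add: if_distrib[of of_int] if_distrib[of "\<lambda>x. x * _"] finite_box cong: if_cong)

lemma raise_op_zero: "raise_op m w (\<lambda>c. 0) = (\<lambda>c. 0)"
  using raise_op_combination[of m w "\<lambda>l. 0"] by simp

lemma raise_iter_Delta:
  assumes "length lam = w" and "sorted_wrt (\<ge>) lam" and "\<forall>x\<in>set lam. x \<le> s"
  shows "raise_iter w s t (Delta s lam) = Delta (s + t) (map (\<lambda>x. x + t) lam)"
proof (induction t)
  case (Suc t)
  have "map (\<lambda>x. x + t) lam \<in> box w (s + t)"
    unfolding box_def using assms by (auto simp: sorted_wrt_map)
  then show ?case using Suc.IH raise_op_Delta by (simp add: comp_def)
qed simp

lemma raise_iter_zero: "raise_iter w s t (\<lambda>c. 0) = (\<lambda>c. 0)"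
  by (induction t) (simp_all add: raise_op_zero)

lemma Delta_eq_0_if_hd_greater:
  assumes "lam \<noteq> []" and "m < hd lam"
  shows "Delta m lam c = 0"
proof -
  have "cval m c (int (lam ! 0) + int j) = 0" for j
    using assms by (simp add: cval_def hd_conv_nth)
  then have "(\<Prod>i = 0..<length lam. cval m c (int (lam ! i) + int (p i) - int i)) = 0" for p
    using assms by (intro prod_zero bexI[of _ 0]) auto
  then show ?thesis unfolding Delta_def det_mat_eq_sum by (intro sum.neutral) simp
qed

theorem mainTheorem6:
  fixes n k s :: nat and lam :: "nat list" and \<gamma> :: "nat \<Rightarrow> complex"
  assumes "s \<le> n" and "s \<le> k"
    and "length lam = k - s" and "sorted_wrt (\<ge>) lam"
    and "inj_on \<gamma> {1..n}"
  shows "raise_iter (k - s) s (n - s) (Delta s lam) (esym \<gamma> {1..n}) =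
    (\<Sum>S | S \<subseteq> {1..n} \<and> card S = s.
       Delta s lam (esym \<gamma> S) * (\<Prod>i\<in>{1..n} - S. \<gamma> i ^ k)
       / (\<Prod>i\<in>{1..n} - S. \<Prod>j\<in>S. \<gamma> i - \<gamma> j))"
proof (cases "\<forall>x\<in>set lam. x \<le> s")
  case True
  then show ?thesis
    using raise_iter_Delta[OF assms(3,4) True, of "n - s"] assms
      Delta_esym_shift_expansion[of "{1..n}" s "n - s" \<gamma> k lam]
    by simp
next
  case False
  then have "lam \<noteq> []" and "s < hd lam"
    using assms(4) by (cases lam; auto)+
  then have "Delta s lam = (\<lambda>c. 0)" using Delta_eq_0_if_hd_greater by blast
  then show ?thesis by (simp add: raise_iter_zero)
qed

end
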